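(* Let $\mathcal{A}=(Q,\Sigma,q_0,\Delta,F,C)$ be a PA of dimension $d$. Then there exists a PA $\mathcal{A}^{IO}$ of dimension $d+1$ such that: the initial state of $\mathcal{A}^{IO}$ is its only accepting state; $L(\mathcal{A})\setminus\{\varepsilon\}=L(\mathcal{A}^{IO})\setminus\{\varepsilon\}$; and the underlying graph of $\mathcal{A}^{IO}$ is strongly connected (its set of states forms a single strongly connected component).
   Context: A semi-linear set in $\mathbb{N}^d$ is a finite union of sets $\{b_0+\sum_{j=1}^\ell b_jz_j\mid z_j\in\mathbb{N}\}$ with $b_j\in\mathbb{N}^d$. A Parikh automaton (PA) of dimension $d$ is $(Q,\Sigma,q_0,\Delta,F,C)$ with finite $Q$, $q_0\in Q$, $F\subseteq Q$, finite $\Delta\subseteq Q\times\Sigma\times\mathbb{N}^d\times Q$, semi-linear $C\subseteq\mathbb{N}^d$. A run on $w=x_1\cdots x_n$ is $r_1\cdots r_n$ with $r_i=(p_{i-1},x_i,\mathbf{v}_i,p_i)\in\Delta$, $p_0=q_0$ (the empty run on $\varepsilon$ if $n=0$); it is accepting if $p_n\in F$ and $\sum_i\mathbf{v}_i\in C$; $L(\mathcal{A})$ is the set of finite words with an accepting run. The underlying graph has vertex set the states and an edge $(p,q)$ iff some transition goes from $p$ to $q$; a strongly connected component is a maximal set of mutually reachable vertices. *)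

theory Defs
  imports Main
begin

text \<open>Vectors of \<open>\<nat>\<^sup>d\<close> are represented as lists of naturals of length d.\<close>

definition vadd :: "nat list \<Rightarrow> nat list \<Rightarrow> nat list" where
  "vadd u v = map2 (+) u v"

definition vzero :: "nat \<Rightarrow> nat list" where
  "vzero d = replicate d 0"

definition vsmult :: "nat \<Rightarrow> nat list \<Rightarrow> nat list" where
  "vsmult k v = map ((*) k) v"

definition vsum :: "nat \<Rightarrow> nat list list \<Rightarrow> nat list" where
  "vsum d vs = foldr vadd vs (vzero d)"

definition linear_set :: "nat \<Rightarrow> nat list \<Rightarrow> nat list list \<Rightarrow> nat list set" where
  "linear_set d b0 bs =
     {vadd b0 (vsum d (map2 vsmult zs bs)) | zs. length zs = length bs}"

definition semilinear :: "nat \<Rightarrow> nat list set \<Rightarrow> bool" where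
  "semilinear d C \<longleftrightarrow> (\<exists>S. finite S \<and>
      (\<forall>(b0, bs) \<in> S. length b0 = d \<and> (\<forall>b \<in> set bs. length b = d)) \<and>
      C = (\<Union>(b0, bs) \<in> S. linear_set d b0 bs))"

type_synonym ('q, 'a) transition = "'q \<times> 'a \<times> nat list \<times> 'q"

record ('q, 'a) pa =
  states :: "'q set"
  alphabet :: "'a set"
  init :: 'q
  trans :: "('q, 'a) transition set"
  final :: "'q set"
  constr :: "nat list set"

definition src :: "('q, 'a) transition \<Rightarrow> 'q" where "src t = fst t"
definition lbl :: "('q, 'a) transition \<Rightarrow> 'a" where "lbl t = fst (snd t)"
definition vec :: "('q, 'a) transition \<Rightarrow> nat list" where "vec t = fst (snd (snd t))"
definition tgt :: "('q, 'a) transition \<Rightarrow> 'q" where "tgt t = snd (snd (snd t))"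

definition is_pa :: "nat \<Rightarrow> ('q, 'a) pa \<Rightarrow> bool" where
  "is_pa d A \<longleftrightarrow> finite (states A) \<and> finite (alphabet A) \<and>
     init A \<in> states A \<and> final A \<subseteq> states A \<and> finite (trans A) \<and>
     trans A \<subseteq> states A \<times> alphabet A \<times> {v. length v = d} \<times> states A \<and>
     semilinear d (constr A)"

fun is_run :: "('q, 'a) transition set \<Rightarrow> 'q \<Rightarrow> ('q, 'a) transition list \<Rightarrow> 'q \<Rightarrow> bool" where
  "is_run D p [] q \<longleftrightarrow> p = q"
| "is_run D p (t # ts) q \<longleftrightarrow> t \<in> D \<and> src t = p \<and> is_run D (tgt t) ts q"

definition lang :: "nat \<Rightarrow> ('q, 'a) pa \<Rightarrow> 'a list set" where
  "lang d A = {map lbl ts | ts. \<exists>q. is_run (trans A) (init A) ts q \<and> q \<in> final A \<and>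
                                   vsum d (map vec ts) \<in> constr A}"

definition graph_edges :: "('q, 'a) pa \<Rightarrow> ('q \<times> 'q) set" where
  "graph_edges A = {(src t, tgt t) | t. t \<in> trans A}"

definition strongly_connected :: "('q, 'a) pa \<Rightarrow> bool" where
  "strongly_connected A \<longleftrightarrow> (\<forall>p \<in> states A. \<forall>q \<in> states A. (p, q) \<in> (graph_edges A)\<^sup>*)"

end

(* Add a fresh state None that is both initial and the only accepting state: it is left like
   the initial state of A and entered wherever A could enter a final state. A new last
   coordinate counts the entries into None and the constraint demands exactly one, so
   accepting runs of the new automaton are the nonempty accepting runs of A. Strong
   connectivity comes from reset transitions between any two states; they add 2 to the
   new coordinate and hence never occur in an accepting run. *)

theory Submission
  imports Defs
begin

lemma vadd_snoc: "length u = length v \<Longrightarrow> vadd (u @ [a]) (v @ [b]) = vadd u v @ [a + b]"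
  by (simp add: vadd_def)

lemma length_vsmult [simp]: "length (vsmult k v) = length v"
  by (simp add: vsmult_def)

lemma length_vsum: "\<forall>v \<in> set vs. length v = d \<Longrightarrow> length (vsum d vs) = d"
  by (induction vs) (auto simp: vsum_def vzero_def vadd_def)

lemma vsum_Suc:
  assumes "\<forall>v \<in> set vs. length v = Suc d"
  shows "vsum (Suc d) vs = vsum d (map butlast vs) @ [sum_list (map last vs)]"
  using assms
proof (induction vs)
  case Nil
  then show ?case by (simp add: vsum_def vzero_def replicate_append_same)
next
  case (Cons v vs)
  then have v: "v = butlast v @ [last v]"
    by (metis append_butlast_last_id list.size(3) list.set_intros(1) nat.distinct(1))
  have "length (vsum d (map butlast vs)) = length (butlast v)"
    using Cons.prems by (simp add: length_vsum)
  then have "vadd v (vsum d (map butlast vs) @ [sum_list (map last vs)])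
      = vadd (butlast v) (vsum d (map butlast vs)) @ [last v + sum_list (map last vs)]"
    by (subst v) (simp add: vadd_snoc)
  then show ?case
    using Cons by (simp add: vsum_def)
qed

lemma linear_set_snoc:
  assumes "length b0 = d" "\<forall>b \<in> set bs. length b = d"
  shows "linear_set (Suc d) (b0 @ [c]) (map (\<lambda>b. b @ [0]) bs) = (\<lambda>v. v @ [c]) ` linear_set d b0 bs"
proof -
  have shift: "vadd (b0 @ [c]) (vsum (Suc d) (map2 vsmult zs (map (\<lambda>b. b @ [0]) bs)))
      = vadd b0 (vsum d (map2 vsmult zs bs)) @ [c]" if "length zs = length bs" for zs
  proof -
    have "\<forall>v \<in> set (map2 vsmult zs bs). length v = d"
      using assms(2) by (auto dest: set_zip_rightD)
    moreover have "map2 vsmult zs (map (\<lambda>b. b @ [0]) bs) = map (\<lambda>v. v @ [0]) (map2 vsmult zs bs)"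
      using that by (induction zs bs rule: list_induct2) (simp_all add: vsmult_def)
    ultimately have "vsum (Suc d) (map2 vsmult zs (map (\<lambda>b. b @ [0]) bs)) = vsum d (map2 vsmult zs bs) @ [0]"
      using vsum_Suc[of "map (\<lambda>v. v @ [0]) (map2 vsmult zs bs)" d] by (simp add: comp_def)
    then show ?thesis
      using assms(1) \<open>\<forall>v \<in> set (map2 vsmult zs bs). length v = d\<close> by (simp add: vadd_snoc length_vsum)
  qed
  show ?thesis
    unfolding linear_set_def setcompr_eq_image image_image length_map
    by (intro image_cong) (simp_all add: shift)
qed

lemma semilinear_snoc:
  assumes "semilinear d C"
  shows "semilinear (Suc d) ((\<lambda>v. v @ [c]) ` C)"
proof -
  obtain S where S: "finite S" "C = (\<Union>(b0, bs) \<in> S. linear_set d b0 bs)"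
    and lengths: "\<And>b0 bs. (b0, bs) \<in> S \<Longrightarrow> length b0 = d \<and> (\<forall>b \<in> set bs. length b = d)"
    using assms unfolding semilinear_def by fast
  define S' where "S' = (\<lambda>(b0, bs). (b0 @ [c], map (\<lambda>b. b @ [0]) bs)) ` S"
  have "(\<lambda>v. v @ [c]) ` C = (\<Union>(b0, bs) \<in> S. linear_set (Suc d) (b0 @ [c]) (map (\<lambda>b. b @ [0]) bs))"
    unfolding S(2) image_UN using lengths by (intro SUP_cong refl) (auto simp: linear_set_snoc)
  also have "\<dots> = (\<Union>(b0, bs) \<in> S'. linear_set (Suc d) b0 bs)"
    unfolding S'_def by (simp add: image_image case_prod_beta)
  finally have "(\<lambda>v. v @ [c]) ` C = (\<Union>(b0, bs) \<in> S'. linear_set (Suc d) b0 bs)" .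
  moreover have "\<forall>(b0, bs) \<in> S'. length b0 = Suc d \<and> (\<forall>b \<in> set bs. length b = Suc d)"
    using lengths unfolding S'_def by auto
  ultimately show ?thesis
    using S(1) unfolding semilinear_def S'_def by blast
qed

lemma transition_sel [simp]:
  "src (p, a, v, q) = p" "lbl (p, a, v, q) = a" "vec (p, a, v, q) = v" "tgt (p, a, v, q) = q"
  by (simp_all add: src_def lbl_def vec_def tgt_def)

lemma is_run_subset: "is_run D p ts q \<Longrightarrow> set ts \<subseteq> D"
  by (induction ts arbitrary: p) auto

definition io_orig :: "('q, 'a) pa \<Rightarrow> 'q option \<Rightarrow> 'q" where
  "io_orig A s = (case s of None \<Rightarrow> init A | Some p \<Rightarrow> p)"

lemma io_orig_simps [simp]: "io_orig A None = init A" "io_orig A (Some p) = p"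
  by (simp_all add: io_orig_def)

(* Without letters there are no transitions at all, so only a single state is strongly connected. *)
definition io_states :: "('q, 'a) pa \<Rightarrow> 'q option set" where
  "io_states A = (if alphabet A = {} then {None} else insert None (Some ` states A))"

definition io_trans :: "nat \<Rightarrow> ('q, 'a) pa \<Rightarrow> ('q option, 'a) transition set" where
  "io_trans d A =
     {(s, a, v @ [0], Some q) | s a v q. (io_orig A s, a, v, q) \<in> trans A}
   \<union> {(s, a, v @ [1], None) | s a v q. (io_orig A s, a, v, q) \<in> trans A \<and> q \<in> final A}
   \<union> io_states A \<times> alphabet A \<times> {vzero d @ [2]} \<times> io_states A"

definition io_automaton :: "nat \<Rightarrow> ('q, 'a) pa \<Rightarrow> ('q option, 'a) pa" where
  "io_automaton d A = \<lparr>states = io_states A, alphabet = alphabet A, init = None,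
     trans = io_trans d A, final = {None}, constr = (\<lambda>v. v @ [1]) ` constr A\<rparr>"

definition io_mark :: "('q, 'a) transition \<Rightarrow> nat" where
  "io_mark t = last (vec t)"

lemma io_mark_simp [simp]: "io_mark (s, a, v, s') = last v"
  by (simp add: io_mark_def)

lemma io_transE:
  assumes "t \<in> io_trans d A"
  obtains (step) s a v q where "t = (s, a, v @ [0], Some q)" "(io_orig A s, a, v, q) \<in> trans A"
  | (accept) s a v q where "t = (s, a, v @ [1], None)" "(io_orig A s, a, v, q) \<in> trans A" "q \<in> final A"
  | (reset) s a s' where "t = (s, a, vzero d @ [2], s')"
      "s \<in> io_states A" "a \<in> alphabet A" "s' \<in> io_states A"
  using assms unfolding io_trans_def by blast

lemma io_trans_subset:
  assumes "is_pa d A"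
  shows "io_trans d A \<subseteq> io_states A \<times> alphabet A
     \<times> ((\<lambda>(v, c). v @ [c]) ` (insert (vzero d) (vec ` trans A) \<times> {0, 1, 2}) \<inter> {v. length v = Suc d})
     \<times> io_states A"
proof
  fix t assume t: "t \<in> io_trans d A"
  have trans: "trans A \<subseteq> states A \<times> alphabet A \<times> {v. length v = d} \<times> states A"
    using assms by (simp add: is_pa_def)
  have source: "s \<in> io_states A" if "(io_orig A s, a, v, q) \<in> trans A" for s a v q
    using that trans by (cases s) (auto simp: io_states_def)
  have target: "Some q \<in> io_states A" if "(p, a, v, q) \<in> trans A" for p a v q
    using that trans by (auto simp: io_states_def)
  from t show "t \<in> io_states A \<times> alphabet A
     \<times> ((\<lambda>(v, c). v @ [c]) ` (insert (vzero d) (vec ` trans A) \<times> {0, 1, 2}) \<inter> {v. length v = Suc d})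
     \<times> io_states A"
  proof (cases rule: io_transE)
    case (step s a v q)
    then show ?thesis
      using source[OF step(2)] target[OF step(2)] trans by (force simp: io_states_def)
  next
    case (accept s a v q)
    then show ?thesis
      using source[OF accept(2)] trans by (force simp: io_states_def)
  next
    case (reset s a s')
    then show ?thesis by (auto simp: vzero_def)
  qed
qed

lemma is_pa_io_automaton:
  assumes "is_pa d A"
  shows "is_pa (Suc d) (io_automaton d A)"
proof -
  have A: "finite (states A)" "finite (alphabet A)" "finite (trans A)" "semilinear d (constr A)"
    using assms by (simp_all add: is_pa_def)
  then have "finite (io_states A)"
    by (simp add: io_states_def)
  then have "finite (io_trans d A)"
    using A by (intro finite_subset[OF io_trans_subset[OF assms]]) auto
  moreover have "io_trans d A \<subseteq> io_states A \<times> alphabet A \<times> {v. length v = Suc d} \<times> io_states A"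
    using io_trans_subset[OF assms] by blast
  ultimately show ?thesis
    using \<open>finite (io_states A)\<close> A semilinear_snoc[OF A(4)]
    by (simp add: is_pa_def io_automaton_def io_states_def)
qed

lemma strongly_connected_io_automaton: "strongly_connected (io_automaton d A)"
  unfolding strongly_connected_def
proof (intro ballI)
  fix s s' assume s: "s \<in> states (io_automaton d A)" and s': "s' \<in> states (io_automaton d A)"
  show "(s, s') \<in> (graph_edges (io_automaton d A))\<^sup>*"
  proof (cases "alphabet A = {}")
    case True
    then show ?thesis
      using s s' by (simp add: io_automaton_def io_states_def)
  next
    case False
    then obtain a where "a \<in> alphabet A" by blast
    then have "(s, a, vzero d @ [2], s') \<in> trans (io_automaton d A)"
      using s s' by (simp add: io_automaton_def io_trans_def)
    then have "(s, s') \<in> graph_edges (io_automaton d A)"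
      unfolding graph_edges_def by force
    then show ?thesis by blast
  qed
qed

lemma vsum_io_run:
  assumes "is_pa d A" "is_run (io_trans d A) s ts s'"
  shows "vsum (Suc d) (map vec ts) = vsum d (map (\<lambda>u. butlast (vec u)) ts) @ [sum_list (map io_mark ts)]"
proof -
  have "\<forall>v \<in> set (map vec ts). length v = Suc d"
    using io_trans_subset[OF assms(1)] is_run_subset[OF assms(2)] by fastforce
  then show ?thesis
    by (simp add: vsum_Suc io_mark_def[abs_def] comp_def)
qed

lemma run_imp_io_run:
  assumes "is_run (trans A) (io_orig A s) ts q" "q \<in> final A" "ts \<noteq> []"
  shows "\<exists>us. is_run (io_trans d A) s us None \<and> map lbl us = map lbl ts \<and>
     map (\<lambda>u. butlast (vec u)) us = map vec ts \<and> sum_list (map io_mark us) = 1"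
  using assms
proof (induction ts arbitrary: s)
  case Nil
  then show ?case by simp
next
  case (Cons t ts)
  then obtain a v p where t: "t = (io_orig A s, a, v, p)" and "t \<in> trans A"
    by (cases t) (auto simp: src_def)
  show ?case
  proof (cases "ts = []")
    case True
    then have "(s, a, v @ [1], None) \<in> io_trans d A"
      using Cons.prems t \<open>t \<in> trans A\<close> by (auto simp: io_trans_def)
    then show ?thesis
      using True t by (intro exI[of _ "[(s, a, v @ [1], None)]"]) simp
  next
    case False
    have "is_run (trans A) p ts q"
      using Cons.prems(1) t by simp
    then obtain us where us: "is_run (io_trans d A) (Some p) us None" "map lbl us = map lbl ts"
      "map (\<lambda>u. butlast (vec u)) us = map vec ts" "sum_list (map io_mark us) = 1"
      using Cons.IH[of "Some p"] Cons.prems(2) False unfolding io_orig_simps by blast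
    have "(s, a, v @ [0], Some p) \<in> io_trans d A"
      using t \<open>t \<in> trans A\<close> by (auto simp: io_trans_def)
    then show ?thesis
      using us t by (intro exI[of _ "(s, a, v @ [0], Some p) # us"]) simp
  qed
qed

lemma unmarked_io_run_to_None_Nil:
  assumes "is_run (io_trans d A) s ts None" "sum_list (map io_mark ts) = 0"
  shows "ts = []"
  using assms
proof (induction ts arbitrary: s)
  case Nil
  then show ?case by simp
next
  case (Cons t ts)
  then have "t \<in> io_trans d A" "io_mark t = 0" "ts = []"
    by auto
  then show ?case
    using Cons.prems by (cases rule: io_transE) auto
qed

lemma io_run_imp_run:
  assumes "is_run (io_trans d A) s us None" "sum_list (map io_mark us) = 1"
  shows "\<exists>ts q. is_run (trans A) (io_orig A s) ts q \<and> q \<in> final A \<and>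
     map lbl ts = map lbl us \<and> map vec ts = map (\<lambda>u. butlast (vec u)) us"
  using assms
proof (induction us arbitrary: s)
  case Nil
  then show ?case by simp
next
  case (Cons u us)
  from Cons.prems have u: "u \<in> io_trans d A" "src u = s" and us: "is_run (io_trans d A) (tgt u) us None"
    by auto
  from u(1) show ?case
  proof (cases rule: io_transE)
    case (step s' a v p)
    then obtain ts q where "is_run (trans A) p ts q" "q \<in> final A"
      "map lbl ts = map lbl us" "map vec ts = map (\<lambda>u. butlast (vec u)) us"
      using Cons.IH[OF us] Cons.prems by auto
    then show ?thesis
      using step u by (intro exI[of _ "(io_orig A s, a, v, p) # ts"] exI[of _ q]) auto
  next
    case (accept s' a v q)
    then have "us = []"
      using unmarked_io_run_to_None_Nil[OF us] Cons.prems by simp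
    then show ?thesis
      using accept u by (intro exI[of _ "[(io_orig A s, a, v, q)]"] exI[of _ q]) auto
  next
    case reset
    then show ?thesis
      using Cons.prems by simp
  qed
qed

lemma lang_io_automaton:
  assumes "is_pa d A"
  shows "lang (Suc d) (io_automaton d A) - {[]} = lang d A - {[]}"
proof (intro equalityI subsetI)
  fix w assume "w \<in> lang (Suc d) (io_automaton d A) - {[]}"
  then obtain us where us: "is_run (io_trans d A) None us None" "w = map lbl us" "w \<noteq> []"
    and "vsum (Suc d) (map vec us) \<in> (\<lambda>v. v @ [1]) ` constr A"
    by (auto simp: lang_def io_automaton_def)
  then have "vsum d (map (\<lambda>u. butlast (vec u)) us) \<in> constr A" "sum_list (map io_mark us) = 1"
    using vsum_io_run[OF assms us(1)] by auto
  moreover obtain ts q where "is_run (trans A) (init A) ts q" "q \<in> final A"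
    "map lbl ts = map lbl us" "map vec ts = map (\<lambda>u. butlast (vec u)) us"
    using io_run_imp_run[OF us(1) \<open>sum_list (map io_mark us) = 1\<close>] by auto
  ultimately show "w \<in> lang d A - {[]}"
    using us unfolding lang_def by (auto intro!: exI[of _ ts])
next
  fix w assume "w \<in> lang d A - {[]}"
  then obtain ts q where ts: "is_run (trans A) (init A) ts q" "q \<in> final A" "w = map lbl ts" "w \<noteq> []"
    and "vsum d (map vec ts) \<in> constr A"
    by (auto simp: lang_def)
  moreover obtain us where us: "is_run (io_trans d A) None us None" "map lbl us = map lbl ts"
    "map (\<lambda>u. butlast (vec u)) us = map vec ts" "sum_list (map io_mark us) = 1"
    using run_imp_io_run[of A None ts q d] ts by auto
  moreover have "vsum (Suc d) (map vec us) = vsum d (map vec ts) @ [1]"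
    using vsum_io_run[OF assms us(1)] us by simp
  ultimately show "w \<in> lang (Suc d) (io_automaton d A) - {[]}"
    unfolding lang_def by (auto simp: io_automaton_def intro!: exI[of _ us])
qed

theorem lemma9:
  fixes A :: "('q, 'a) pa" and d :: nat
  assumes "is_pa d A"
  shows "\<exists>B :: ('q option, 'a) pa.
           is_pa (d + 1) B \<and> alphabet B = alphabet A \<and>
           final B = {init B} \<and>
           lang d A - {[]} = lang (d + 1) B - {[]} \<and>
           strongly_connected B"
proof (intro exI[of _ "io_automaton d A"] conjI)
  show "is_pa (d + 1) (io_automaton d A)"
    using is_pa_io_automaton[OF assms] by simp
  show "lang d A - {[]} = lang (d + 1) (io_automaton d A) - {[]}"
    using lang_io_automaton[OF assms] by simp
  show "strongly_connected (io_automaton d A)"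
    by (rule strongly_connected_io_automaton)
qed (simp_all add: io_automaton_def)

end
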